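(* Let $G$ be a $6$-regular graph, $\mathcal S$ a canonical path partition of $G$, and $P$ a path component of $\mathcal S$ with end-vertices $o_1,o_2$. Suppose $x_1,v_3$ are path neighbors on $P$ with $x_1$ heavy, $v_3$ dangerous, and $x_1$ immediately preceding $v_3$ when $P$ is traversed from $o_1$ to $o_2$; let $y_1$ be the other path neighbor of $v_3$ (so $y_1$ immediately follows $v_3$). Let $uv_3$ be a free edge such that $u$ has a path neighbor in $V_2$. Then: (1) $u$ lies on $P$; (2) $u$ lies on $P$ after $y_1$ (in the order from $o_1$ to $o_2$), $u$ has exactly one path neighbor in $V_2$, call it $x_2$, and $x_2$ immediately follows $u$ on $P$ (so $P=o_1\cdots x_1v_3y_1\cdots u x_2\cdots o_2$); (3) $x_2$ is incident to exactly one balanced edge, namely the edge $x_2o_2$; (4) among the balanced edges incident to $y_1$, exactly one has as its other endpoint an end-vertex of a path component, and that endpoint is $o_2$ (all other balanced edges of $y_1$ go to vertices of cycle components). (By reversing $P$, the symmetric statement holds when $v_3$ immediately precedes $x_1$.)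
   Context: All graphs are finite, simple and undirected. A path partition of $G=(V,E)$ is a set of vertex-disjoint paths (single vertices allowed) covering $V$; its members are components. A component with $t\ge3$ vertices is a cycle component if the subgraph induced on its vertex set has a spanning cycle; a one-vertex component is an isolated vertex; every other component is a path component. A path partition is canonical if (1) it has the minimum number of components among all path partitions of $G$; (2) among those, it has the maximum number of cycle components; (3) it has no isolated vertices. Given a canonical path partition $\mathcal S$ of $G$: two vertices are path neighbors if they are consecutive on a path component. An edge of $G$ is a free edge unless it joins two path neighbors or has both endpoints in the same cycle component. $V_1$ is the set of end-vertices of path components together with all vertices of cycle components. The remaining vertices are classified by the first applicable rule: $V_2$: joined by a free edge to a vertex of $V_1$; $V_3$: both path neighbors lie in $V_2$; $V_4$: exactly one path neighbor lies in $V_2$; $V_5$: all others. A balanced edge is a free edge with one endpoint in $V_1$ and the other in $V_2$; for $x\in V_2$, $y\in V_1$ we say $x$ goes to $y$ if $xy$ is a balanced edge. A vertex of $V_2$ is moderate if it is incident to at least two balanced edges, at least one of whose other endpoints is an end-vertex of a path component; it is heavy if it is incident to at least three balanced edges whose other endpoints are end-vertices of path components. A vertex of $V_3$ is dangerous if one of its path neighbors is heavy and the other is moderate. *)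

theory Defs
  imports Main
begin

definition simple_graph :: "'a set \<Rightarrow> ('a \<Rightarrow> 'a \<Rightarrow> bool) \<Rightarrow> bool" where
  "simple_graph V E \<longleftrightarrow> finite V \<and>
     (\<forall>x y. E x y \<longrightarrow> x \<in> V \<and> y \<in> V \<and> x \<noteq> y \<and> E y x)"

definition regular :: "nat \<Rightarrow> 'a set \<Rightarrow> ('a \<Rightarrow> 'a \<Rightarrow> bool) \<Rightarrow> bool" where
  "regular d V E \<longleftrightarrow> (\<forall>v\<in>V. card {u. E v u} = d)"

definition is_path :: "'a set \<Rightarrow> ('a \<Rightarrow> 'a \<Rightarrow> bool) \<Rightarrow> 'a list \<Rightarrow> bool" where
  "is_path V E Q \<longleftrightarrow> Q \<noteq> [] \<and> distinct Q \<and> set Q \<subseteq> V \<and>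
     (\<forall>k. Suc k < length Q \<longrightarrow> E (Q ! k) (Q ! Suc k))"

definition path_partition :: "'a set \<Rightarrow> ('a \<Rightarrow> 'a \<Rightarrow> bool) \<Rightarrow> 'a list set \<Rightarrow> bool" where
  "path_partition V E S \<longleftrightarrow> (\<forall>Q\<in>S. is_path V E Q) \<and>
     (\<forall>Q\<in>S. \<forall>Q'\<in>S. Q \<noteq> Q' \<longrightarrow> set Q \<inter> set Q' = {}) \<and>
     \<Union> (set ` S) = V"

definition has_spanning_cycle :: "('a \<Rightarrow> 'a \<Rightarrow> bool) \<Rightarrow> 'a set \<Rightarrow> bool" where
  "has_spanning_cycle E A \<longleftrightarrow> (\<exists>ys. distinct ys \<and> set ys = A \<and> 3 \<le> length ys \<and>
     (\<forall>k. Suc k < length ys \<longrightarrow> E (ys ! k) (ys ! Suc k)) \<and> E (last ys) (hd ys))"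

definition cycle_comp :: "('a \<Rightarrow> 'a \<Rightarrow> bool) \<Rightarrow> 'a list \<Rightarrow> bool" where
  "cycle_comp E Q \<longleftrightarrow> 3 \<le> length Q \<and> has_spanning_cycle E (set Q)"

definition path_comp :: "('a \<Rightarrow> 'a \<Rightarrow> bool) \<Rightarrow> 'a list \<Rightarrow> bool" where
  "path_comp E Q \<longleftrightarrow> 2 \<le> length Q \<and> \<not> cycle_comp E Q"

definition canonical :: "'a set \<Rightarrow> ('a \<Rightarrow> 'a \<Rightarrow> bool) \<Rightarrow> 'a list set \<Rightarrow> bool" where
  "canonical V E S \<longleftrightarrow> path_partition V E S \<and>
     (\<forall>T. path_partition V E T \<longrightarrow> card S \<le> card T) \<and>
     (\<forall>T. path_partition V E T \<and> card T = card S \<longrightarrow>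
          card {Q\<in>T. cycle_comp E Q} \<le> card {Q\<in>S. cycle_comp E Q}) \<and>
     (\<forall>Q\<in>S. 2 \<le> length Q)"

definition path_nb :: "('a \<Rightarrow> 'a \<Rightarrow> bool) \<Rightarrow> 'a list set \<Rightarrow> 'a \<Rightarrow> 'a \<Rightarrow> bool" where
  "path_nb E S x y \<longleftrightarrow> (\<exists>Q\<in>S. path_comp E Q \<and> (\<exists>k. Suc k < length Q \<and>
     ((Q ! k = x \<and> Q ! Suc k = y) \<or> (Q ! k = y \<and> Q ! Suc k = x))))"

definition path_end :: "('a \<Rightarrow> 'a \<Rightarrow> bool) \<Rightarrow> 'a list set \<Rightarrow> 'a \<Rightarrow> bool" where
  "path_end E S v \<longleftrightarrow> (\<exists>Q\<in>S. path_comp E Q \<and> (v = hd Q \<or> v = last Q))"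

definition in_cycle_comp :: "('a \<Rightarrow> 'a \<Rightarrow> bool) \<Rightarrow> 'a list set \<Rightarrow> 'a \<Rightarrow> bool" where
  "in_cycle_comp E S v \<longleftrightarrow> (\<exists>Q\<in>S. cycle_comp E Q \<and> v \<in> set Q)"

definition free_edge :: "('a \<Rightarrow> 'a \<Rightarrow> bool) \<Rightarrow> 'a list set \<Rightarrow> 'a \<Rightarrow> 'a \<Rightarrow> bool" where
  "free_edge E S x y \<longleftrightarrow> E x y \<and> \<not> path_nb E S x y \<and>
     \<not> (\<exists>Q\<in>S. cycle_comp E Q \<and> x \<in> set Q \<and> y \<in> set Q)"

definition V1 :: "('a \<Rightarrow> 'a \<Rightarrow> bool) \<Rightarrow> 'a list set \<Rightarrow> 'a set" where
  "V1 E S = {v. path_end E S v \<or> in_cycle_comp E S v}"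

definition V2 :: "'a set \<Rightarrow> ('a \<Rightarrow> 'a \<Rightarrow> bool) \<Rightarrow> 'a list set \<Rightarrow> 'a set" where
  "V2 V E S = {v\<in>V. v \<notin> V1 E S \<and> (\<exists>w\<in>V1 E S. free_edge E S v w)}"

definition V3 :: "'a set \<Rightarrow> ('a \<Rightarrow> 'a \<Rightarrow> bool) \<Rightarrow> 'a list set \<Rightarrow> 'a set" where
  "V3 V E S = {v\<in>V. v \<notin> V1 E S \<and> v \<notin> V2 V E S \<and>
                  (\<forall>w. path_nb E S v w \<longrightarrow> w \<in> V2 V E S)}"

definition balanced :: "'a set \<Rightarrow> ('a \<Rightarrow> 'a \<Rightarrow> bool) \<Rightarrow> 'a list set \<Rightarrow> 'a \<Rightarrow> 'a \<Rightarrow> bool" where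
  "balanced V E S x y \<longleftrightarrow> free_edge E S x y \<and>
     ((x \<in> V1 E S \<and> y \<in> V2 V E S) \<or> (x \<in> V2 V E S \<and> y \<in> V1 E S))"

definition moderate :: "'a set \<Rightarrow> ('a \<Rightarrow> 'a \<Rightarrow> bool) \<Rightarrow> 'a list set \<Rightarrow> 'a \<Rightarrow> bool" where
  "moderate V E S x \<longleftrightarrow> x \<in> V2 V E S \<and> 2 \<le> card {y. balanced V E S x y} \<and>
     (\<exists>y. balanced V E S x y \<and> path_end E S y)"

definition heavy :: "'a set \<Rightarrow> ('a \<Rightarrow> 'a \<Rightarrow> bool) \<Rightarrow> 'a list set \<Rightarrow> 'a \<Rightarrow> bool" where
  "heavy V E S x \<longleftrightarrow> x \<in> V2 V E S \<and> 3 \<le> card {y. balanced V E S x y \<and> path_end E S y}"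

definition dangerous :: "'a set \<Rightarrow> ('a \<Rightarrow> 'a \<Rightarrow> bool) \<Rightarrow> 'a list set \<Rightarrow> 'a \<Rightarrow> bool" where
  "dangerous V E S v \<longleftrightarrow> v \<in> V3 V E S \<and>
     (\<exists>a b. path_nb E S v a \<and> path_nb E S v b \<and> a \<noteq> b \<and>
            heavy V E S a \<and> moderate V E S b)"

end

theory Submission
  imports Defs "HOL-Library.Multiset"
begin

text \<open>Every assertion is proved by contradiction with a switching argument. If it failed, the
  free edge \<open>u v\<^sub>3\<close>, an edge from the heavy vertex \<open>x\<^sub>1\<close> to one of its (at least three)
  balanced end-vertex neighbours, and the path edges of \<open>P\<close> and of at most two further path
  components could be recombined into at most as many paths on the same vertices. With the untouched
  components these form another path partition with the minimum number of components, so by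
  maximality of the number of cycle components no new path closes into a cycle. But some new path
  ends at a vertex adjacent (typically by the free edge of a \<open>V\<^sub>2\<close>-vertex) to a vertex that is
  still an end-vertex or lies on a cycle component, and joining the two would give fewer
  components.\<close>

lemma is_path_iff:
  "is_path V E Q \<longleftrightarrow> Q \<noteq> [] \<and> distinct Q \<and> set Q \<subseteq> V \<and> successively E Q"
  by (simp add: is_path_def successively_conv_nth)

definition consecutive :: "'a list \<Rightarrow> 'a \<Rightarrow> 'a \<Rightarrow> bool" where
  "consecutive L a b \<longleftrightarrow> (\<exists>xs ys. L = xs @ a # b # ys \<or> L = xs @ b # a # ys)"

definition ends :: "'a list \<Rightarrow> 'a set" where
  "ends L = {hd L, last L}"

lemma ends_rev [simp]: "ends (rev L) = ends L"
  by (auto simp: ends_def hd_rev last_rev)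

lemma consecutive_conv_nth:
  "consecutive L a b \<longleftrightarrow>
     (\<exists>k. Suc k < length L \<and> (L ! k = a \<and> L ! Suc k = b \<or> L ! k = b \<and> L ! Suc k = a))"
proof
  assume "consecutive L a b"
  then obtain xs ys where "L = xs @ a # b # ys \<or> L = xs @ b # a # ys"
    unfolding consecutive_def by blast
  then show "\<exists>k. Suc k < length L \<and> (L ! k = a \<and> L ! Suc k = b \<or> L ! k = b \<and> L ! Suc k = a)"
    by (intro exI[of _ "length xs"]) (auto simp: nth_append)
next
  assume "\<exists>k. Suc k < length L \<and> (L ! k = a \<and> L ! Suc k = b \<or> L ! k = b \<and> L ! Suc k = a)"
  then obtain k where k: "Suc k < length L" "L ! k = a \<and> L ! Suc k = b \<or> L ! k = b \<and> L ! Suc k = a"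
    by blast
  have "L = take k L @ L ! k # L ! Suc k # drop (Suc (Suc k)) L"
    using k(1) by (metis Cons_nth_drop_Suc Suc_lessD append_take_drop_id)
  with k(2) show "consecutive L a b"
    unfolding consecutive_def by metis
qed

lemma path_nb_iff_consecutive:
  "path_nb E S a b \<longleftrightarrow> (\<exists>Q\<in>S. path_comp E Q \<and> consecutive Q a b)"
  unfolding path_nb_def consecutive_conv_nth ..

lemma consecutive_sym: "consecutive L a b \<longleftrightarrow> consecutive L b a"
  unfolding consecutive_def by blast

lemma consecutive_in_set: "consecutive L a b \<Longrightarrow> a \<in> set L \<and> b \<in> set L"
  unfolding consecutive_def by auto

lemma consecutive_rev [simp]: "consecutive (rev L) a b \<longleftrightarrow> consecutive L a b"
proof -
  have "consecutive (rev L) a b" if "consecutive L a b" for L :: "'a list"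
  proof -
    from that obtain xs ys where "L = xs @ a # b # ys \<or> L = xs @ b # a # ys"
      unfolding consecutive_def by blast
    then have "rev L = rev ys @ b # a # rev xs \<or> rev L = rev ys @ a # b # rev xs"
      by auto
    then show ?thesis
      unfolding consecutive_def by blast
  qed
  from this[of L] this[of "rev L"] show ?thesis
    by auto
qed

lemma consecutive_middle: "consecutive (xs @ a # b # ys) a b"
  unfolding consecutive_def by blast

lemma consecutive_append_Cons_iff:
  assumes "distinct (xs @ a # ys)"
  shows "consecutive (xs @ a # ys) a b \<longleftrightarrow> xs \<noteq> [] \<and> b = last xs \<or> ys \<noteq> [] \<and> b = hd ys"
proof
  assume "consecutive (xs @ a # ys) a b"
  then obtain xs' ys' where "xs @ a # ys = xs' @ a # b # ys' \<or> xs @ a # ys = (xs' @ [b]) @ a # ys'"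
    unfolding consecutive_def by auto
  moreover have "a \<notin> set xs" "a \<notin> set ys"
    using assms by auto
  ultimately have "ys = b # ys' \<or> xs = xs' @ [b]"
    using append_Cons_eq_iff by metis
  then show "xs \<noteq> [] \<and> b = last xs \<or> ys \<noteq> [] \<and> b = hd ys"
    by auto
next
  assume "xs \<noteq> [] \<and> b = last xs \<or> ys \<noteq> [] \<and> b = hd ys"
  then have "xs = butlast xs @ [b] \<or> ys = b # tl ys"
    by auto
  then show "consecutive (xs @ a # ys) a b"
    unfolding consecutive_def by (metis append.assoc append_Cons append_Nil)
qed

lemma far_end_length:
  assumes "\<not> consecutive (xs @ ys) (hd ys) z" "z = last ys" "z \<noteq> hd ys"
  shows "3 \<le> length ys"
proof (rule ccontr)
  assume "\<not> 3 \<le> length ys"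
  then have "ys = [] \<or> (\<exists>a. ys = [a]) \<or> (\<exists>a b. ys = [a, b])"
    by (cases ys rule: remdups_adj.cases) (auto simp: Suc_le_eq)
  then show False
    using assms consecutive_middle[of xs _ _ "[]"] by (auto simp: hd_Nil_eq_last)
qed

lemma near_end_length:
  assumes "\<not> consecutive (xs @ ys) (last xs) z" "z = hd xs" "z \<noteq> last xs"
  shows "3 \<le> length xs"
  using far_end_length[of "rev ys" "rev xs" z] assms consecutive_rev[of "xs @ ys" "last xs" z]
  by (simp add: hd_rev last_rev)

lemma consecutive_oriented:
  assumes "consecutive R u w" "u \<notin> ends R"
  obtains R' ra rb where "R' = R \<or> R' = rev R" "R' = ra @ u # w # rb" "ra \<noteq> []"
proof -
  obtain xs ys where "R = xs @ u # w # ys \<or> R = xs @ w # u # ys"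
    using assms(1) unfolding consecutive_def by blast
  then show thesis
  proof
    assume R: "R = xs @ u # w # ys"
    then have "xs \<noteq> []"
      using assms(2) unfolding ends_def by auto
    then show thesis
      using that[of R xs ys] R by blast
  next
    assume R: "R = xs @ w # u # ys"
    then have "rev R = rev ys @ u # w # rev xs" "ys \<noteq> []"
      using assms(2) unfolding ends_def by auto
    then show thesis
      using that[of "rev R" "rev ys" "rev xs"] by blast
  qed
qed

section \<open>Minimum path partitions and switching\<close>

lemma path_comp_not_cycle: "path_comp E Q \<Longrightarrow> \<not> cycle_comp E Q"
  unfolding path_comp_def by blast

lemma path_partition_finite:
  assumes "finite V" "path_partition V E T"
  shows "finite T"
proof (rule finite_subset)
  show "T \<subseteq> {xs. set xs \<subseteq> V \<and> distinct xs}"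
    using assms(2) unfolding path_partition_def is_path_def by blast
  show "finite {xs. set xs \<subseteq> V \<and> distinct xs}"
    using finite_subset_distinct[OF assms(1)] by simp
qed

lemma path_partition_replace:
  assumes T: "path_partition V E T" and Old: "Old \<subseteq> T"
    and New: "\<forall>N\<in>New. is_path V E N" "\<forall>N\<in>New. \<forall>N'\<in>New. N \<noteq> N' \<longrightarrow> set N \<inter> set N' = {}"
      "\<Union> (set ` New) = \<Union> (set ` Old)"
  shows "path_partition V E (T - Old \<union> New)"
  unfolding path_partition_def
proof (intro conjI)
  have disj: "set A \<inter> set B = {}" if "A \<in> T" "B \<in> T" "A \<noteq> B" for A B
    using T that unfolding path_partition_def by blast
  have old_new: "set A \<inter> set N = {}" if "A \<in> T - Old" "N \<in> New" for A N
  proof -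
    have "set A \<inter> set B = {}" if "B \<in> Old" for B
      using disj that \<open>A \<in> T - Old\<close> Old by blast
    then show ?thesis
      using New(3) \<open>N \<in> New\<close> by blast
  qed
  show "\<forall>A\<in>T - Old \<union> New. \<forall>B\<in>T - Old \<union> New. A \<noteq> B \<longrightarrow> set A \<inter> set B = {}"
  proof (intro ballI impI)
    fix A B assume "A \<in> T - Old \<union> New" "B \<in> T - Old \<union> New" "A \<noteq> B"
    then show "set A \<inter> set B = {}"
      using disj New(2) old_new[of A B] old_new[of B A] by blast
  qed
  show "\<forall>A\<in>T - Old \<union> New. is_path V E A"
    using T New(1) unfolding path_partition_def by blast
  show "\<Union> (set ` (T - Old \<union> New)) = V"
  proof -
    have "\<Union> (set ` (T - Old \<union> New)) = \<Union> (set ` (T - Old)) \<union> \<Union> (set ` Old)"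
      using New(3) by auto
    also have "\<dots> = \<Union> (set ` T)"
      using Old by blast
    finally show ?thesis
      using T unfolding path_partition_def by simp
  qed
qed

lemma closed_path_is_cycle_comp:
  assumes "is_path V E N" "3 \<le> length N" "E (last N) (hd N)"
  shows "cycle_comp E N"
  using assms unfolding cycle_comp_def has_spanning_cycle_def is_path_def by blast

lemma V2_not_V1: "x \<in> V2 V E S \<Longrightarrow> x \<notin> V1 E S"
  unfolding V2_def by blast

lemma balanced_from_V2:
  "balanced V E S x y \<Longrightarrow> x \<in> V2 V E S \<Longrightarrow> free_edge E S x y \<and> y \<in> V1 E S"
  unfolding balanced_def V2_def by blast

locale canonical_partition =
  fixes V :: "'a set" and E :: "'a \<Rightarrow> 'a \<Rightarrow> bool" and S :: "'a list set"
  assumes graph: "simple_graph V E" and canonical: "canonical V E S"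
begin

lemma edge_sym: "E a b \<Longrightarrow> E b a"
  using graph unfolding simple_graph_def by blast

lemma edge_neq: "E a b \<Longrightarrow> a \<noteq> b"
  using graph unfolding simple_graph_def by blast

lemma finite_vertices: "finite V"
  using graph unfolding simple_graph_def by blast

lemma partition: "path_partition V E S"
  using canonical unfolding canonical_def by blast

lemma card_minimal: "path_partition V E T \<Longrightarrow> card S \<le> card T"
  using canonical unfolding canonical_def by blast

lemma cycles_maximal:
  "path_partition V E T \<Longrightarrow> card T = card S \<Longrightarrow>
     card {C\<in>T. cycle_comp E C} \<le> card {C\<in>S. cycle_comp E C}"
  using canonical unfolding canonical_def by blast

lemma component_is_path: "R \<in> S \<Longrightarrow> is_path V E R"
  using partition unfolding path_partition_def by blast

lemma component_unique: "R \<in> S \<Longrightarrow> R' \<in> S \<Longrightarrow> a \<in> set R \<Longrightarrow> a \<in> set R' \<Longrightarrow> R = R'"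
  using partition unfolding path_partition_def by blast

lemma successively_converse [simp]: "successively (\<lambda>x y. E y x) xs \<longleftrightarrow> successively E xs"
  by (auto intro: successively_mono edge_sym)

lemma edge_commute: "E a b \<longleftrightarrow> E b a"
  using edge_sym by blast

lemma is_path_rev [simp]: "is_path V E (rev N) \<longleftrightarrow> is_path V E N"
  by (simp add: is_path_iff)

lemma no_edge_joining_paths:
  assumes T: "path_partition V E T" "card T \<le> card S" and AB: "A \<in> T" "B \<in> T" "A \<noteq> B"
    and A': "is_path V E A'" "set A' = set A" and B': "is_path V E B'" "set B' = set B"
  shows "\<not> E (last A') (hd B')"
proof
  assume edge: "E (last A') (hd B')"
  have "set A \<inter> set B = {}"
    using T(1) AB unfolding path_partition_def by blast
  with A' B' edge have "is_path V E (A' @ B')"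
    by (auto simp: is_path_iff successively_append_iff)
  then have "path_partition V E (T - {A, B} \<union> {A' @ B'})"
    using AB A' B' by (intro path_partition_replace[OF T(1)]) auto
  moreover have "card (T - {A, B} \<union> {A' @ B'}) < card T"
  proof -
    have "finite T"
      using path_partition_finite[OF finite_vertices T(1)] .
    moreover have "{A, B} \<subseteq> T" "card {A, B} = 2"
      using AB by auto
    ultimately have "card (T - {A, B}) + 2 = card T"
      using card_Diff_subset[of "{A, B}" T] card_mono[of T "{A, B}"] by simp
    then show ?thesis
      using card_Un_le[of "T - {A, B}" "{A' @ B'}"] by simp
  qed
  ultimately show False
    using card_minimal T(2) by fastforce
qed

lemma path_ending_at:
  assumes "is_path V E A" "a \<in> ends A"
  obtains A' where "is_path V E A'" "set A' = set A" "last A' = a"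
  using assms that[of A] that[of "rev A"] by (auto simp: ends_def last_rev)

lemma path_starting_at:
  assumes "is_path V E A" "a \<in> ends A"
  obtains A' where "is_path V E A'" "set A' = set A" "hd A' = a"
  using assms that[of A] that[of "rev A"] by (auto simp: ends_def hd_rev)

lemma cycle_path_starting_at:
  assumes "is_path V E C" "cycle_comp E C" "b \<in> set C"
  obtains B where "is_path V E B" "set B = set C" "hd B = b"
proof -
  obtain ys where ys: "distinct ys" "set ys = set C" "successively E ys" "E (last ys) (hd ys)"
    using assms(2) unfolding cycle_comp_def has_spanning_cycle_def successively_conv_nth[symmetric]
    by blast
  obtain xs1 xs2 where split: "ys = xs1 @ b # xs2"
    using ys(2) assms(3) by (metis split_list)
  have "successively E ((b # xs2) @ xs1)"
  proof (cases "xs1 = []")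
    case False
    then have "E (last (b # xs2)) (hd xs1)"
      using ys(4) split by simp
    then show ?thesis
      using ys(3) split by (simp only: successively_append_iff) simp
  qed (use ys(3) split in simp)
  moreover have "set (b # xs2 @ xs1) = set C" "distinct (b # xs2 @ xs1)"
    using ys split by auto
  ultimately show thesis
    using assms(1) that[of "b # xs2 @ xs1"] by (auto simp: is_path_iff)
qed

lemma no_edge_between_ends:
  assumes T: "path_partition V E T" "card T \<le> card S" and AB: "A \<in> T" "B \<in> T" "A \<noteq> B"
    and "a \<in> ends A" "b \<in> ends B"
  shows "\<not> E a b"
proof -
  have paths: "is_path V E A" "is_path V E B"
    using T(1) AB unfolding path_partition_def by blast+
  obtain A' where "is_path V E A'" "set A' = set A" "last A' = a"
    using path_ending_at[OF paths(1) assms(6)] .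
  moreover obtain B' where "is_path V E B'" "set B' = set B" "hd B' = b"
    using path_starting_at[OF paths(2) assms(7)] .
  ultimately show ?thesis
    using no_edge_joining_paths[OF T AB] by blast
qed

lemma no_edge_from_end_to_cycle:
  assumes T: "path_partition V E T" "card T \<le> card S" and AC: "A \<in> T" "C \<in> T" "A \<noteq> C"
    and "cycle_comp E C" "a \<in> ends A" "b \<in> set C"
  shows "\<not> E a b"
proof -
  have paths: "is_path V E A" "is_path V E C"
    using T(1) AC unfolding path_partition_def by blast+
  obtain A' where "is_path V E A'" "set A' = set A" "last A' = a"
    using path_ending_at[OF paths(1) assms(7)] .
  moreover obtain B where "is_path V E B" "set B = set C" "hd B = b"
    using cycle_path_starting_at[OF paths(2) assms(6,8)] .
  ultimately show ?thesis
    using no_edge_joining_paths[OF T AC] by blast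
qed

lemma switching_preserves_minimality:
  assumes Old: "Old \<subseteq> S" "\<forall>R\<in>Old. \<not> cycle_comp E R"
    and New: "\<forall>N\<in>New. is_path V E N" "\<forall>N\<in>New. \<forall>N'\<in>New. N \<noteq> N' \<longrightarrow> set N \<inter> set N' = {}"
      "\<Union> (set ` New) = \<Union> (set ` Old)" "finite New" "card New \<le> card Old"
  shows "path_partition V E (S - Old \<union> New)" "card (S - Old \<union> New) \<le> card S"
    "(S - Old) \<inter> New = {}" "\<forall>N\<in>New. \<not> cycle_comp E N"
proof -
  let ?T = "S - Old \<union> New"
  show pp: "path_partition V E ?T"
    using path_partition_replace[OF partition Old(1) New(1-3)] .
  have "finite S"
    using path_partition_finite[OF finite_vertices partition] .
  then have "card (S - Old) + card Old = card S"
    using Old(1) by (metis card_Diff_subset card_mono finite_subset le_add_diff_inverse2)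
  then show card: "card ?T \<le> card S"
    using card_Un_le[of "S - Old" New] New(5) by linarith
  show disj: "(S - Old) \<inter> New = {}"
  proof (rule ccontr)
    assume "(S - Old) \<inter> New \<noteq> {}"
    then obtain N where N: "N \<in> S" "N \<notin> Old" "N \<in> New"
      by blast
    then obtain a where "a \<in> set N"
      using New(1) unfolding is_path_def by (metis list.set_sel(1))
    then obtain R where "R \<in> Old" "a \<in> set R"
      using New(3) N(3) by blast
    then show False
      using component_unique[of R N a] Old(1) N \<open>a \<in> set N\<close> by blast
  qed
  have "card ?T = card S"
    using card card_minimal[OF pp] by simp
  then have "card {C\<in>?T. cycle_comp E C} \<le> card {C\<in>S. cycle_comp E C}"
    using cycles_maximal[OF pp] by blast
  moreover have "{C\<in>?T. cycle_comp E C} = {C\<in>S. cycle_comp E C} \<union> {N\<in>New. cycle_comp E N}"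
    using Old by blast
  moreover have "{C\<in>S. cycle_comp E C} \<inter> {N\<in>New. cycle_comp E N} = {}"
    using disj Old by blast
  ultimately have "card {N\<in>New. cycle_comp E N} = 0"
    using \<open>finite S\<close> New(4) by (simp add: card_Un_disjoint)
  then show "\<forall>N\<in>New. \<not> cycle_comp E N"
    using New(4) by auto
qed

lemma switching_by_lists:
  assumes Os: "set Os \<subseteq> S" "distinct Os" "\<forall>R\<in>set Os. path_comp E R"
    and Ns: "\<forall>N\<in>set Ns. N \<noteq> [] \<and> successively E N" "mset (concat Ns) = mset (concat Os)"
      "length Ns \<le> length Os"
  shows "path_partition V E (S - set Os \<union> set Ns)" "card (S - set Os \<union> set Ns) \<le> card S"
    "(S - set Os) \<inter> set Ns = {}" "\<forall>N\<in>set Ns. is_path V E N \<and> \<not> cycle_comp E N"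
    "distinct Ns"
proof -
  have "distinct (concat Os)"
    unfolding distinct_concat_iff
    using Os component_is_path component_unique
    by (auto simp: distinct_removeAll is_path_def) blast
  then have "distinct (concat Ns)"
    using mset_eq_imp_distinct_iff[OF Ns(2)] by simp
  then have new_distinct: "distinct Ns"
    and new_disjoint: "\<forall>N\<in>set Ns. \<forall>N'\<in>set Ns. N \<noteq> N' \<longrightarrow> set N \<inter> set N' = {}"
    and each_distinct: "\<forall>N\<in>set Ns. distinct N"
    using Ns(1) by (auto simp: distinct_concat_iff removeAll_id)
  have same_vertices: "\<Union> (set ` set Ns) = \<Union> (set ` set Os)"
    using arg_cong[OF Ns(2), of set_mset] by simp
  have "\<Union> (set ` set Os) \<subseteq> V"
    using Os(1) component_is_path unfolding is_path_def by blast
  then have "set N \<subseteq> V" if "N \<in> set Ns" for N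
    using that same_vertices by blast
  then have new_paths: "\<forall>N\<in>set Ns. is_path V E N"
    using Ns(1) each_distinct by (simp add: is_path_iff)
  have "card (set Ns) \<le> card (set Os)"
    using Ns(3) new_distinct Os(2) by (simp add: distinct_card)
  moreover have "\<forall>R\<in>set Os. \<not> cycle_comp E R"
    using Os(3) path_comp_not_cycle by blast
  ultimately show "path_partition V E (S - set Os \<union> set Ns)"
    "card (S - set Os \<union> set Ns) \<le> card S" "(S - set Os) \<inter> set Ns = {}"
    "\<forall>N\<in>set Ns. is_path V E N \<and> \<not> cycle_comp E N" "distinct Ns"
    using switching_preserves_minimality[OF Os(1) _ new_paths new_disjoint same_vertices]
      new_paths new_distinct by simp_all
qed

text \<open>The rerouted paths and the untouched components form again a minimum path partition, so an
  end of a new path cannot be adjacent to a vertex of \<open>V\<^sub>1\<close> that lies on a cycle component or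
  is still an end-vertex (of another new path, or of \<open>N\<close> itself if \<open>N\<close> has at least three
  vertices).\<close>

theorem switching_excludes_edge_to_V1:
  assumes Os: "set Os \<subseteq> S" "distinct Os" "\<forall>R\<in>set Os. path_comp E R"
    and Ns: "\<forall>M\<in>set (N # Ms). M \<noteq> [] \<and> successively E M"
      "mset (concat (N # Ms)) = mset (concat Os)" "length (N # Ms) \<le> length Os"
    and w: "w \<in> ends N" and edge: "E w z" "z \<in> V1 E S"
    and old_ends: "z \<in> \<Union> (ends ` set Os) \<Longrightarrow>
      z \<in> \<Union> (ends ` set Ms) \<or> z \<in> ends N \<and> 3 \<le> length N"
  shows False
proof -
  let ?T = "S - set Os \<union> set (N # Ms)"
  note T = switching_by_lists[OF Os Ns]
  have N: "N \<in> ?T" "is_path V E N" "\<not> cycle_comp E N" "N \<notin> S - set Os" "N \<notin> set Ms"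
    using T(3-5) by auto
  have other_end: False if "M \<in> ?T" "M \<noteq> N" "z \<in> ends M" for M
    using no_edge_between_ends[OF T(1,2) N(1) that(1) that(2)[symmetric] w that(3)] edge(1)
    by blast
  from edge(2) consider (endpoint) M where "M \<in> S" "path_comp E M" "z \<in> ends M"
    | (cycle) C where "C \<in> S" "cycle_comp E C" "z \<in> set C"
    unfolding V1_def path_end_def in_cycle_comp_def ends_def by blast
  then show False
  proof cases
    case (endpoint M)
    show False
    proof (cases "M \<in> set Os")
      case True
      then have "z \<in> \<Union> (ends ` set Ms) \<or> z \<in> ends N \<and> 3 \<le> length N"
        using old_ends endpoint(3) by blast
      moreover have "E (last N) (hd N)" if "z \<in> ends N"
        using that w edge(1) edge_neq[OF edge(1)] edge_sym unfolding ends_def by auto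
      ultimately show False
        using other_end N closed_path_is_cycle_comp by fastforce
    next
      case False
      then show False
        using other_end[of M] endpoint N(4) by blast
    qed
  next
    case (cycle C)
    then have "C \<in> ?T" "C \<noteq> N"
      using Os(3) N(3) path_comp_not_cycle by auto
    then show False
      using no_edge_from_end_to_cycle[OF T(1,2) N(1)] cycle w edge(1) by metis
  qed
qed

lemma heavy_imp_moderate:
  assumes "heavy V E S x"
  shows "moderate V E S x"
proof -
  let ?B = "{y. balanced V E S x y}" and ?H = "{y. balanced V E S x y \<and> path_end E S y}"
  have "?B \<subseteq> V"
    using graph unfolding balanced_def free_edge_def simple_graph_def by blast
  then have "card ?H \<le> card ?B"
    using finite_vertices by (intro card_mono) (auto intro: finite_subset)
  moreover have "3 \<le> card ?H"
    using assms unfolding heavy_def by blast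
  moreover from this have "?H \<noteq> {}"
    by (intro notI) simp
  ultimately have "2 \<le> card ?B" "\<exists>y. balanced V E S x y \<and> path_end E S y"
    by auto
  then show ?thesis
    using assms unfolding heavy_def moderate_def by blast
qed

lemma free_edge_sym: "free_edge E S a b \<Longrightarrow> free_edge E S b a"
proof -
  have "path_nb E S b a \<longleftrightarrow> path_nb E S a b"
    unfolding path_nb_iff_consecutive by (simp add: consecutive_sym)
  then show "free_edge E S a b \<Longrightarrow> free_edge E S b a"
    unfolding free_edge_def using edge_sym by blast
qed

lemma path_nb_in_component:
  assumes "R \<in> S" "a \<in> set R"
  shows "path_nb E S a b \<longleftrightarrow> path_comp E R \<and> consecutive R a b"
  unfolding path_nb_iff_consecutive using assms component_unique consecutive_in_set by metis

lemma V1_in_path_component: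
  assumes "R \<in> S" "path_comp E R" "a \<in> set R"
  shows "a \<in> V1 E S \<longleftrightarrow> a \<in> ends R"
proof
  assume "a \<in> V1 E S"
  then consider M where "M \<in> S" "path_comp E M" "a \<in> ends M"
    | C where "C \<in> S" "cycle_comp E C" "a \<in> set C"
    unfolding V1_def path_end_def in_cycle_comp_def ends_def by blast
  then show "a \<in> ends R"
  proof cases
    case 1
    then have "a \<in> set M"
      using component_is_path unfolding is_path_def ends_def by auto
    then show ?thesis
      using 1 component_unique assms by metis
  next
    case 2
    then show ?thesis
      using component_unique assms path_comp_not_cycle by metis
  qed
next
  assume "a \<in> ends R"
  then show "a \<in> V1 E S"
    using assms unfolding V1_def path_end_def ends_def by blast
qed

lemma free_edge_in_path_component:
  assumes "R \<in> S" "path_comp E R" "a \<in> set R"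
  shows "free_edge E S a b \<longleftrightarrow> E a b \<and> \<not> consecutive R a b"
  unfolding free_edge_def path_nb_in_component[OF assms(1,3)]
  using assms component_unique path_comp_not_cycle by metis

end

section \<open>Rerouting a path component\<close>

locale oriented_component = canonical_partition +
  fixes Q P :: "'a list"
  assumes Q_in_S: "Q \<in> S" and Q_path_comp: "path_comp E Q" and orientation: "P = Q \<or> P = rev Q"
begin

lemma P_path: "is_path V E P"
  using orientation component_is_path[OF Q_in_S] by auto

lemma P_distinct: "distinct P"
  using P_path unfolding is_path_def by blast

lemma P_successively: "successively E P"
  using P_path by (simp add: is_path_iff)

lemma set_Q: "set Q = set P"
  using orientation by auto

lemma mset_Q: "mset Q = mset P"
  using orientation by auto

lemma ends_Q: "ends Q = ends P"
  using orientation by auto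

lemma consecutive_Q: "consecutive Q a b \<longleftrightarrow> consecutive P a b"
  using orientation by auto

lemma path_nb_on_P: "a \<in> set P \<Longrightarrow> path_nb E S a b \<longleftrightarrow> consecutive P a b"
  using path_nb_in_component[OF Q_in_S, of a b] Q_path_comp by (simp add: set_Q consecutive_Q)

lemma V1_on_P: "a \<in> set P \<Longrightarrow> a \<in> V1 E S \<longleftrightarrow> a \<in> ends P"
  using V1_in_path_component[OF Q_in_S Q_path_comp] set_Q ends_Q by simp

lemma free_edge_on_P: "a \<in> set P \<Longrightarrow> free_edge E S a b \<longleftrightarrow> E a b \<and> \<not> consecutive P a b"
  using free_edge_in_path_component[OF Q_in_S Q_path_comp, of a b] by (simp add: set_Q consecutive_Q)

lemma other_component_disjoint: "R \<in> S \<Longrightarrow> R \<noteq> Q \<Longrightarrow> set R \<inter> set P = {}"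
  using component_unique[OF _ Q_in_S] set_Q by blast

definition other_path_component :: "'a list \<Rightarrow> 'a list \<Rightarrow> bool" where
  "other_path_component R R' \<longleftrightarrow> R \<in> S \<and> path_comp E R \<and> R \<noteq> Q \<and> (R' = R \<or> R' = rev R)"

lemma other_path_componentD:
  assumes "other_path_component R R'"
  shows "R \<in> S" "path_comp E R" "R \<noteq> Q" "mset R = mset R'" "ends R = ends R'"
    "successively E R'" "R' \<noteq> []" "2 \<le> length R'" "distinct (P @ R')"
proof -
  show R: "R \<in> S" "path_comp E R" "R \<noteq> Q"
    using assms unfolding other_path_component_def by blast+
  have orient: "R' = R \<or> R' = rev R"
    using assms unfolding other_path_component_def by blast
  then show "mset R = mset R'" "ends R = ends R'"
    by auto
  have "is_path V E R'"
    using orient component_is_path[OF R(1)] by auto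
  moreover have "set R' \<inter> set P = {}"
    using other_component_disjoint[OF R(1,3)] orient by auto
  ultimately show "successively E R'" "distinct (P @ R')"
    using P_distinct by (auto simp: is_path_iff)
  show "2 \<le> length R'"
    using R(2) orient unfolding path_comp_def by auto
  then show "R' \<noteq> []"
    by auto
qed

lemma path_end_cases:
  assumes "path_end E S e"
  obtains "e \<in> ends P" | R R' where "other_path_component R R'" "hd R' = e"
proof -
  obtain R where R: "R \<in> S" "path_comp E R" "e \<in> ends R"
    using assms unfolding path_end_def ends_def by blast
  show thesis
  proof (cases "R = Q")
    case True
    then show thesis
      using that(1) R(3) ends_Q by blast
  next
    case False
    have "R' = R \<or> R' = rev R \<Longrightarrow> hd R' = e \<Longrightarrow> thesis" for R'
      using that(2)[of R R'] R False unfolding other_path_component_def by blast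
    then show thesis
      using R(3) unfolding ends_def by (metis empty_iff hd_rev insert_iff)
  qed
qed

lemma dangerous_split:
  assumes P: "P = pre @ x1 # v3 # post" and "dangerous V E S v3"
    and y1: "path_nb E S v3 y1" "y1 \<noteq> x1"
  obtains rest where "post = y1 # rest" "moderate V E S y1"
proof -
  have "v3 \<notin> V1 E S"
    using \<open>dangerous V E S v3\<close> unfolding dangerous_def V3_def by blast
  then have "post \<noteq> []"
    using V1_on_P[of v3] P by (auto simp: ends_def)
  then obtain y rest where post: "post = y # rest"
    by (cases post) auto
  have neighbours: "path_nb E S v3 b \<longleftrightarrow> b = x1 \<or> b = y" for b
    using path_nb_on_P[of v3 b] consecutive_append_Cons_iff[of "pre @ [x1]" v3 "y # rest" b]
      P_distinct P post by simp
  then have "y = y1"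
    using y1 by blast
  moreover obtain a b where "path_nb E S v3 a" "path_nb E S v3 b" "a \<noteq> b"
    "heavy V E S a" "moderate V E S b"
    using \<open>dangerous V E S v3\<close> unfolding dangerous_def by blast
  then have "moderate V E S y"
    using neighbours heavy_imp_moderate by metis
  ultimately show thesis
    using that post by simp
qed

lemma V2_free_neighbour_on_P:
  assumes "x \<in> V2 V E S" "x \<in> set P"
  obtains z where "E x z" "z \<in> V1 E S" "\<not> consecutive P x z"
  using assms free_edge_on_P unfolding V2_def by blast

lemmas rerouting_simps = ends_def successively_append_iff successively_Cons hd_rev last_rev
  hd_append edge_commute Suc_le_eq

text \<open>Each configuration below is excluded by exhibiting the rerouted paths, the first of which
  ends at the vertex adjacent to \<open>V\<^sub>1\<close>.\<close>

lemma off_P_x1_to_other_component: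
  assumes P: "P = pre @ x1 # v3 # rest" "pre \<noteq> []" "rest \<noteq> []"
    and R: "other_path_component R R'" "R' = ra @ u # w # rb" "ra \<noteq> []"
    and Re: "other_path_component Re Re'" "Re \<noteq> R"
    and edges: "E v3 u" "E x1 (hd Re')"
    and z: "E w z" "z \<in> V1 E S" "\<not> consecutive R' w z" "z \<noteq> hd Re'"
  shows False
proof -
  note R' = other_path_componentD[OF R(1)] and Re' = other_path_componentD[OF Re(1)]
  have far: "z = last (w # rb) \<Longrightarrow> 3 \<le> length (w # rb)"
    using far_end_length[of "ra @ [u]" "w # rb" z] z(3) R(2) edge_neq[OF z(1)] by simp
  show False
    by (rule switching_excludes_edge_to_V1[of "[Q, R, Re]" "w # rb"
        "[pre @ x1 # Re', rev (v3 # rest) @ rev (ra @ [u])]" "w" "z"])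
      (use P R Re edges z R' Re' far P_successively Q_in_S Q_path_comp in
        \<open>simp_all add: ends_Q mset_Q, auto simp: rerouting_simps\<close>)
qed

lemma off_P_x1_to_last:
  assumes P: "P = pre @ x1 # v3 # rest" "pre \<noteq> []" "rest \<noteq> []"
    and R: "other_path_component R R'" "R' = ra @ u # w # rb" "ra \<noteq> []"
    and edges: "E v3 u" "E x1 (last P)"
    and z: "E w z" "z \<in> V1 E S" "\<not> consecutive R' w z" "z \<noteq> last P"
  shows False
proof -
  note R' = other_path_componentD[OF R(1)]
  have far: "z = last (w # rb) \<Longrightarrow> 3 \<le> length (w # rb)"
    using far_end_length[of "ra @ [u]" "w # rb" z] z(3) R(2) edge_neq[OF z(1)] by simp
  show False
    by (rule switching_excludes_edge_to_V1[of "[Q, R]" "w # rb"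
        "[pre @ x1 # rev (v3 # rest) @ rev (ra @ [u])]" "w" "z"])
      (use P R edges z R' far P_successively Q_in_S Q_path_comp in
        \<open>simp_all add: ends_Q mset_Q, auto simp: rerouting_simps\<close>)
qed

lemma off_P_x1_to_hd_R:
  assumes P: "P = pre @ x1 # v3 # rest" "pre \<noteq> []" "rest \<noteq> []"
    and R: "other_path_component R R'" "R' = ra @ u # w # rb" "ra \<noteq> []"
    and edges: "E v3 u" "E x1 (hd R')"
    and z: "E w z" "z \<in> V1 E S" "\<not> consecutive R' w z" "z \<noteq> hd R'"
  shows False
proof -
  note R' = other_path_componentD[OF R(1)]
  have far: "z = last (w # rb) \<Longrightarrow> 3 \<le> length (w # rb)"
    using far_end_length[of "ra @ [u]" "w # rb" z] z(3) R(2) edge_neq[OF z(1)] by simp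
  show False
    by (rule switching_excludes_edge_to_V1[of "[Q, R]" "w # rb"
        "[pre @ x1 # ra @ u # v3 # rest]" "w" "z"])
      (use P R edges z R' far P_successively Q_in_S Q_path_comp in
        \<open>simp_all add: ends_Q mset_Q, auto simp: rerouting_simps\<close>)
qed

lemma off_P_x1_to_last_R:
  assumes P: "P = pre @ x1 # v3 # rest" "pre \<noteq> []" "rest \<noteq> []"
    and R: "other_path_component R R'" "R' = ra @ u # w # rb" "ra \<noteq> []"
    and edges: "E v3 u" "E x1 (last R')"
    and z: "E w z" "z \<in> V1 E S" "z \<noteq> last R'"
  shows False
  by (rule switching_excludes_edge_to_V1[of "[Q, R]" "pre @ x1 # rev (w # rb)"
      "[rev (v3 # rest) @ rev (ra @ [u])]" "w" "z"])
    (use P R edges z other_path_componentD[OF R(1)] P_successively Q_in_S Q_path_comp in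
      \<open>simp_all add: ends_Q mset_Q, auto simp: rerouting_simps\<close>)

lemma before_x1_succ_u_to_last:
  assumes P: "P = q1 @ u # qx @ v3 # rest" "q1 \<noteq> []" "qx \<noteq> []" "rest \<noteq> []"
    and edges: "E v3 u" "E (last qx) (last P)"
    and z: "E (hd qx) z" "z \<in> V1 E S" "z \<noteq> last P"
  shows False
  by (rule switching_excludes_edge_to_V1[of "[Q]" "q1 @ u # v3 # rest @ rev qx" "[]" "hd qx" "z"])
    (use P edges z P_successively Q_in_S Q_path_comp in
      \<open>simp_all add: ends_Q mset_Q, auto simp: rerouting_simps\<close>)

lemma before_x1_succ_u_to_other_component:
  assumes P: "P = q1 @ u # qx @ v3 # rest" "q1 \<noteq> []" "qx \<noteq> []" "rest \<noteq> []"
    and Re: "other_path_component Re Re'" and edges: "E v3 u" "E (last qx) (hd Re')"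
    and z: "E (hd qx) z" "z \<in> V1 E S" "z \<noteq> hd Re'"
  shows False
proof -
  note Re' = other_path_componentD[OF Re]
  have long: "3 \<le> length (qx @ Re')"
    using P(3) Re'(8) by (cases qx) auto
  show False
    by (rule switching_excludes_edge_to_V1[of "[Q, Re]" "qx @ Re'"
        "[rev (v3 # rest) @ u # rev q1]" "hd qx" "z"])
      (use P Re edges z Re' long P_successively Q_in_S Q_path_comp in
        \<open>simp_all add: ends_Q mset_Q, auto simp: rerouting_simps\<close>)
qed

lemma before_x1_pred_u_to_other_component:
  assumes P: "P = q1 @ u # qx @ v3 # rest" "q1 \<noteq> []" "qx \<noteq> []" "rest \<noteq> []"
    and Re: "other_path_component Re Re'" and edges: "E v3 u" "E (last qx) (hd Re')"
    and z: "E (last q1) z" "z \<in> V1 E S" "\<not> consecutive P (last q1) z" "z \<noteq> hd Re'"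
  shows False
proof -
  note Re' = other_path_componentD[OF Re]
  have near: "z = hd q1 \<Longrightarrow> 3 \<le> length q1"
    using near_end_length[of q1 "u # qx @ v3 # rest" z] P(1) z(3) edge_neq[OF z(1)] by simp
  show False
    by (rule switching_excludes_edge_to_V1[of "[Q, Re]" "q1"
        "[rev (v3 # rest) @ u # qx @ Re']" "last q1" "z"])
      (use P Re edges z Re' near P_successively Q_in_S Q_path_comp in
        \<open>simp_all add: ends_Q mset_Q, auto simp: rerouting_simps\<close>)
qed

lemma before_x1_pred_u_to_component_end:
  assumes P: "P = q1 @ u # qx @ v3 # rest" "q1 \<noteq> []" "qx \<noteq> []" "rest \<noteq> []"
    and Rz: "other_path_component Rz Rz'"
    and edges: "E v3 u" "E (last qx) (last P)" "E (last q1) (hd Rz')"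
  shows False
  by (rule switching_excludes_edge_to_V1[of "[Q, Rz]" "rev (u # qx) @ v3 # rest"
      "[rev Rz' @ rev q1]" "last qx" "last P"])
    (use P Rz edges other_path_componentD[OF Rz] V1_on_P P_successively Q_in_S Q_path_comp in
      \<open>simp_all add: ends_Q mset_Q, auto simp: rerouting_simps\<close>)

lemma after_y1_x1_to_last:
  assumes P: "P = pre @ x1 # v3 # mid @ u # m2" "pre \<noteq> []" "mid \<noteq> []" "m2 \<noteq> []"
    and edges: "E v3 u" "E x1 (last P)" and z: "E (last mid) z" "z \<in> V1 E S" "z \<noteq> last P"
  shows False
  by (rule switching_excludes_edge_to_V1[of "[Q]" "pre @ x1 # rev (u # m2) @ v3 # mid"
      "[]" "last mid" "z"])
    (use P edges z P_successively Q_in_S Q_path_comp in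
      \<open>simp_all add: ends_Q mset_Q, auto simp: rerouting_simps\<close>)

lemma after_y1_x1_to_other_component:
  assumes P: "P = pre @ x1 # v3 # mid @ u # m2" "pre \<noteq> []" "mid \<noteq> []" "m2 \<noteq> []"
    and Re: "other_path_component Re Re'" and edges: "E v3 u" "E x1 (hd Re')"
    and z: "E (last mid) z" "z \<in> V1 E S" "z \<noteq> hd Re'"
  shows False
  by (rule switching_excludes_edge_to_V1[of "[Q, Re]" "rev (v3 # mid) @ u # m2"
      "[pre @ x1 # Re']" "last mid" "z"])
    (use P Re edges z other_path_componentD[OF Re] P_successively Q_in_S Q_path_comp in
      \<open>simp_all add: ends_Q mset_Q, auto simp: rerouting_simps\<close>)

lemma y1_end_other_x2_adjacent:
  assumes P: "P = pre @ x1 # v3 # mid @ u # x2 # m3" "pre \<noteq> []" "mid \<noteq> []"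
    and Rf: "other_path_component Rf Rf'" and edges: "E v3 u" "E x2 (hd Rf')"
    and t: "E (hd mid) t" "t \<in> V1 E S" "t \<noteq> hd Rf'"
  shows False
  by (rule switching_excludes_edge_to_V1[of "[Q, Rf]" "pre @ x1 # v3 # u # rev mid"
      "[rev (x2 # m3) @ Rf']" "hd mid" "t"])
    (use P Rf edges t other_path_componentD[OF Rf] P_successively Q_in_S Q_path_comp in
      \<open>simp_all add: ends_Q mset_Q, auto simp: rerouting_simps\<close>)

lemma y1_end_other_x2_not_adjacent:
  assumes P: "P = pre @ x1 # v3 # mid @ u # x2 # m3" "pre \<noteq> []" "mid \<noteq> []"
    and Rf: "other_path_component Rf Rf'" and edges: "E v3 u" "E (hd mid) (hd Rf')"
    and z: "E x2 z" "z \<in> V1 E S" "\<not> consecutive P x2 z" "z \<noteq> hd Rf'"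
  shows False
proof -
  have far: "z = last P \<Longrightarrow> 3 \<le> length (x2 # m3)"
    using far_end_length[of "pre @ x1 # v3 # mid @ [u]" "x2 # m3" z] P(1) z(1,3) edge_neq[OF z(1)]
    by simp
  show False
    by (rule switching_excludes_edge_to_V1[of "[Q, Rf]" "x2 # m3"
        "[pre @ x1 # v3 # u # rev mid @ Rf']" "x2" "z"])
      (use P Rf edges z far other_path_componentD[OF Rf] P_successively Q_in_S Q_path_comp in
        \<open>simp_all add: ends_Q mset_Q, auto simp: rerouting_simps\<close>)
qed

lemma y1_end_first_x2_adjacent:
  assumes P: "P = pre @ x1 # v3 # mid @ u # x2 # m3" "pre \<noteq> []" "mid \<noteq> []"
    and edges: "E v3 u" "E (hd mid) (hd P)" "E x2 (hd P)"
    and t: "E (hd mid) t" "t \<in> V1 E S" "t \<noteq> hd P"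
  shows False
  by (rule switching_excludes_edge_to_V1[of "[Q]" "rev (x2 # m3) @ pre @ x1 # v3 # u # rev mid"
      "[]" "hd mid" "t"])
    (use P edges t P_successively Q_in_S Q_path_comp in
      \<open>simp_all add: ends_Q mset_Q, auto simp: rerouting_simps\<close>)

lemma y1_end_first_x1_to_other_component:
  assumes P: "P = pre @ x1 # v3 # mid @ u # x2 # m3" "pre \<noteq> []" "mid \<noteq> []"
    and Re: "other_path_component Re Re'" and edges: "E v3 u" "E (hd mid) (hd P)" "E x1 (hd Re')"
    and z: "E x2 z" "z \<in> V1 E S" "\<not> consecutive P x2 z" "z \<noteq> hd P" "z \<noteq> hd Re'"
  shows False
proof -
  have far: "z = last P \<Longrightarrow> 3 \<le> length (x2 # m3)"
    using far_end_length[of "pre @ x1 # v3 # mid @ [u]" "x2 # m3" z] P(1) z(1,3) edge_neq[OF z(1)]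
    by simp
  show False
    by (rule switching_excludes_edge_to_V1[of "[Q, Re]" "x2 # m3"
        "[rev (pre @ x1 # Re') @ mid @ [u, v3]]" "x2" "z"])
      (use P Re edges z far other_path_componentD[OF Re] P_successively Q_in_S Q_path_comp in
        \<open>simp_all add: ends_Q mset_Q, auto simp: rerouting_simps\<close>)
qed

lemma y1_end_first_x1_to_last:
  assumes P: "P = pre @ x1 # v3 # mid @ u # x2 # m3" "pre \<noteq> []" "mid \<noteq> []"
    and edges: "E v3 u" "E (hd mid) (hd P)" "E x1 (last P)"
    and z: "E x2 z" "z \<in> V1 E S" "z \<noteq> hd P" "z \<noteq> last P"
  shows False
  by (rule switching_excludes_edge_to_V1[of "[Q]" "(x2 # m3) @ rev (pre @ [x1]) @ mid @ [u, v3]"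
      "[]" "x2" "z"])
    (use P edges z P_successively Q_in_S Q_path_comp in
      \<open>simp_all add: ends_Q mset_Q, auto simp: rerouting_simps\<close>)

lemma x2_balanced_only_to_last:
  assumes P: "P = pre @ x1 # v3 # mid @ u # x2 # m3" "pre \<noteq> []" "mid \<noteq> []"
    and edges: "E v3 u" "E (hd mid) (last P)"
    and t: "E x2 t" "t \<in> V1 E S" "t \<noteq> last P"
  shows False
  by (rule switching_excludes_edge_to_V1[of "[Q]" "pre @ x1 # v3 # u # rev mid @ rev (x2 # m3)"
      "[]" "x2" "t"])
    (use P edges t P_successively Q_in_S Q_path_comp in
      \<open>simp_all add: ends_Q mset_Q, auto simp: rerouting_simps\<close>)

end

section \<open>A heavy vertex followed by a dangerous one\<close>

locale heavy_dangerous_pair = oriented_component +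
  fixes pre x1 v3 y1 rest u
  assumes P_decomp: "P = pre @ x1 # v3 # y1 # rest"
    and x1_heavy: "heavy V E S x1" and y1_moderate: "moderate V E S y1"
    and v3_not_V1: "v3 \<notin> V1 E S" and v3_not_V2: "v3 \<notin> V2 V E S"
    and free_u_v3: "free_edge E S u v3"
    and u_has_V2_neighbour: "\<exists>w. path_nb E S u w \<and> w \<in> V2 V E S"
begin

lemma x1_V2: "x1 \<in> V2 V E S"
  using x1_heavy unfolding heavy_def by blast

lemma y1_V2: "y1 \<in> V2 V E S"
  using y1_moderate unfolding moderate_def by blast

lemma pre_nonempty: "pre \<noteq> []"
  using V1_on_P[of x1] V2_not_V1[OF x1_V2] P_decomp by (auto simp: ends_def)

lemma edge_v3_u: "E v3 u"
  using free_u_v3 edge_sym unfolding free_edge_def by blast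

lemma u_not_V1: "u \<notin> V1 E S"
proof
  assume "u \<in> V1 E S"
  moreover have "v3 \<in> V"
    using P_path P_decomp unfolding is_path_def by auto
  ultimately have "v3 \<in> V2 V E S"
    using v3_not_V1 free_edge_sym[OF free_u_v3] unfolding V2_def by blast
  then show False
    using v3_not_V2 by blast
qed

lemma x1_balanced_end_avoiding: "\<exists>e. balanced V E S x1 e \<and> path_end E S e \<and> e \<noteq> a \<and> e \<noteq> b"
proof (rule ccontr)
  let ?A = "{e. balanced V E S x1 e \<and> path_end E S e}"
  assume "\<not> ?thesis"
  then have "?A \<subseteq> {a, b}"
    by blast
  then have "card ?A \<le> card {a, b}"
    by (intro card_mono) auto
  also have "\<dots> \<le> 2"
    by (simp add: card_insert_if)
  finally show False
    using x1_heavy unfolding heavy_def by simp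
qed

lemma x1_extension:
  obtains "E x1 (last P)" "z \<noteq> last P"
  | Re Re' where "other_path_component Re Re'" "E x1 (hd Re')" "z \<noteq> hd Re'"
proof -
  obtain e where e: "balanced V E S x1 e" "path_end E S e" "e \<noteq> hd P" "e \<noteq> z"
    using x1_balanced_end_avoiding by blast
  then have "E x1 e"
    using balanced_from_V2[OF e(1) x1_V2] unfolding free_edge_def by blast
  with e that show thesis
    by (cases rule: path_end_cases[OF e(2)]) (auto simp: ends_def)
qed

lemma x1_extension_or_end_at:
  obtains Re Re' where "other_path_component Re Re'" "E x1 (hd Re')" "z \<noteq> hd Re'"
  | Rz Rz' where "other_path_component Rz Rz'" "hd Rz' = z" "E x1 (last P)"
proof -
  have end_edge: "E x1 e" if "balanced V E S x1 e" for e
    using balanced_from_V2[OF that x1_V2] unfolding free_edge_def by blast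
  obtain e where e: "balanced V E S x1 e" "path_end E S e" "e \<noteq> hd P" "e \<noteq> z"
    using x1_balanced_end_avoiding by blast
  show thesis
  proof (cases "e = last P")
    case False
    with e end_edge that(1) show thesis
      by (cases rule: path_end_cases[OF e(2)]) (auto simp: ends_def)
  next
    case True
    then have "E x1 (last P)"
      using e(1) end_edge by blast
    obtain e' where e': "balanced V E S x1 e'" "path_end E S e'" "e' \<noteq> hd P" "e' \<noteq> last P"
      using x1_balanced_end_avoiding by blast
    then obtain R R' where "other_path_component R R'" "hd R' = e'"
      by (cases rule: path_end_cases[OF e'(2)]) (auto simp: ends_def)
    then show thesis
      using that end_edge[OF e'(1)] \<open>E x1 (last P)\<close> by (cases "e' = z") auto
  qed
qed

lemma u_V2_neighbour:
  obtains R w z where "R \<in> S" "path_comp E R" "consecutive R u w" "w \<in> V2 V E S"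
    "E w z" "z \<in> V1 E S" "\<not> consecutive R w z"
proof -
  obtain w R where R: "R \<in> S" "path_comp E R" "consecutive R u w" and w: "w \<in> V2 V E S"
    using u_has_V2_neighbour unfolding path_nb_iff_consecutive by blast
  obtain z where "z \<in> V1 E S" "free_edge E S w z"
    using w unfolding V2_def by blast
  moreover have "w \<in> set R"
    using consecutive_in_set[OF R(3)] by blast
  ultimately show thesis
    using that R w free_edge_in_path_component[OF R(1,2)] by blast
qed

lemma u_on_P: "u \<in> set P"
proof (rule ccontr)
  assume u_off_P: "u \<notin> set P"
  obtain R w z where R: "R \<in> S" "path_comp E R" "consecutive R u w"
    and z: "E w z" "z \<in> V1 E S" "\<not> consecutive R w z"
    using u_V2_neighbour by blast
  have "u \<in> set R"
    using consecutive_in_set[OF R(3)] by blast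
  then have "R \<noteq> Q" "u \<notin> ends R"
    using u_off_P set_Q V1_in_path_component[OF R(1,2)] u_not_V1 by auto
  then obtain R' ra rb where R': "R' = R \<or> R' = rev R" "R' = ra @ u # w # rb" "ra \<noteq> []"
    using consecutive_oriented[OF R(3)] by blast
  have other: "other_path_component R R'"
    using R R' \<open>R \<noteq> Q\<close> unfolding other_path_component_def by blast
  have z': "\<not> consecutive R' w z"
    using z(3) R'(1) by auto
  note P = P_decomp pre_nonempty list.distinct(2)
  show False
  proof (cases rule: x1_extension[of z])
    case 1
    then show False
      using off_P_x1_to_last[OF P other R'(2,3) edge_v3_u _ z(1,2) z'] by blast
  next
    case (2 Re Re')
    show False
    proof (cases "Re = R")
      case False
      show False
        using off_P_x1_to_other_component[OF P other R'(2,3) 2(1) False edge_v3_u 2(2) z(1,2) z' 2(3)]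
        by blast
    next
      case True
      then have "ends Re' = ends R'"
        using other_path_componentD(5)[OF 2(1)] other_path_componentD(5)[OF other] by simp
      then have "hd Re' \<in> ends R'"
        unfolding ends_def by blast
      then show False
        using off_P_x1_to_hd_R[OF P other R'(2,3) edge_v3_u _ z(1,2) z']
          off_P_x1_to_last_R[OF P other R'(2,3) edge_v3_u _ z(1,2)] 2(2,3)
        unfolding ends_def by auto
    qed
  qed
qed

lemma u_V2_neighbour_on_P:
  obtains w z where "consecutive P u w" "w \<in> V2 V E S" "E w z" "z \<in> V1 E S"
    "\<not> consecutive P w z"
proof -
  obtain R w z where R: "R \<in> S" "path_comp E R" "consecutive R u w" "w \<in> V2 V E S"
    "E w z" "z \<in> V1 E S" "\<not> consecutive R w z"
    using u_V2_neighbour by blast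
  have "R = Q"
    using component_unique[OF R(1) Q_in_S] consecutive_in_set[OF R(3)] u_on_P set_Q by blast
  then show thesis
    using that R by (simp add: consecutive_Q)
qed

lemma u_not_before_x1: "u \<notin> set pre"
proof
  assume "u \<in> set pre"
  then obtain q1 q2 where "pre = q1 @ u # q2"
    by (meson split_list)
  then have P: "P = q1 @ u # (q2 @ [x1]) @ v3 # y1 # rest" "q2 @ [x1] \<noteq> []"
    using P_decomp by simp_all
  then have "q1 \<noteq> []"
    using V1_on_P[OF u_on_P] u_not_V1 by (auto simp: ends_def)
  note P = P(1) this P(2) list.distinct(2)
  obtain w z where w: "consecutive P u w" and z: "E w z" "z \<in> V1 E S" "\<not> consecutive P w z"
    using u_V2_neighbour_on_P by blast
  have "w = last q1 \<or> w = hd (q2 @ [x1])"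
    using w consecutive_append_Cons_iff[of q1 u "(q2 @ [x1]) @ v3 # y1 # rest" w] P_distinct P(1)
    by (auto simp: hd_append)
  then show False
  proof
    assume "w = hd (q2 @ [x1])"
    with z show False
      by (cases rule: x1_extension[of z])
        (use before_x1_succ_u_to_last[OF P edge_v3_u] before_x1_succ_u_to_other_component[OF P]
          edge_v3_u in auto)
  next
    assume "w = last q1"
    with z show False
      by (cases rule: x1_extension_or_end_at[of z])
        (use before_x1_pred_u_to_other_component[OF P] before_x1_pred_u_to_component_end[OF P]
          edge_v3_u in auto)
  qed
qed

lemma u_after_y1:
  obtains m1 m2 where "P = pre @ x1 # v3 # y1 # m1 @ u # m2" "m2 \<noteq> []"
proof -
  have "\<not> consecutive P v3 u"
    using free_edge_on_P[of v3 u] free_edge_sym[OF free_u_v3] P_decomp by simp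
  moreover have "consecutive P v3 x1" "consecutive P v3 y1"
    using consecutive_middle[of pre x1 v3 "y1 # rest"] consecutive_middle[of "pre @ [x1]" v3 y1 rest]
    by (simp_all add: P_decomp consecutive_sym)
  ultimately have "u \<in> set rest"
    using u_on_P u_not_before_x1 edge_neq[OF edge_v3_u] P_decomp by auto
  then obtain m1 m2 where P: "P = pre @ x1 # v3 # y1 # m1 @ u # m2"
    using P_decomp by (metis split_list)
  moreover have "m2 \<noteq> []"
    using V1_on_P[OF u_on_P] u_not_V1 P by (auto simp: ends_def)
  ultimately show thesis
    using that by blast
qed

lemma predecessor_of_u_not_V2:
  assumes P: "P = pre @ x1 # v3 # mid @ u # m2" "mid \<noteq> []" "m2 \<noteq> []"
  shows "last mid \<notin> V2 V E S"
proof
  assume "last mid \<in> V2 V E S"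
  then obtain z where z: "z \<in> V1 E S" "free_edge E S (last mid) z"
    unfolding V2_def by blast
  then have "E (last mid) z"
    unfolding free_edge_def by blast
  with z(1) show False
    by (cases rule: x1_extension[of z])
      (use after_y1_x1_to_last[OF P(1) pre_nonempty P(2,3) edge_v3_u]
        after_y1_x1_to_other_component[OF P(1) pre_nonempty P(2,3)] edge_v3_u in auto)
qed

lemma u_V2_path_neighbour:
  assumes P: "P = pre @ x1 # v3 # mid @ u # m2" "mid \<noteq> []" "m2 \<noteq> []"
  shows "{w. path_nb E S u w \<and> w \<in> V2 V E S} = {hd m2}"
proof -
  have "path_nb E S u w \<longleftrightarrow> w = last mid \<or> w = hd m2" for w
    using path_nb_on_P[OF u_on_P] P_distinct P
      consecutive_append_Cons_iff[of "pre @ x1 # v3 # mid" u m2 w] by auto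
  moreover have "hd m2 \<in> V2 V E S"
    using u_has_V2_neighbour predecessor_of_u_not_V2[OF P] calculation by auto
  ultimately show ?thesis
    using predecessor_of_u_not_V2[OF P] by auto
qed

lemma y1_balanced_edge: "balanced V E S y1 t \<Longrightarrow> E y1 t \<and> t \<in> V1 E S"
  using balanced_from_V2[OF _ y1_V2] unfolding free_edge_def by auto

lemma y1_other_balanced: "\<exists>t. balanced V E S y1 t \<and> t \<noteq> f"
proof (rule ccontr)
  assume "\<not> ?thesis"
  then have "{t. balanced V E S y1 t} \<subseteq> {f}"
    by blast
  then have "card {t. balanced V E S y1 t} \<le> 1"
    using card_mono[of "{f}"] by fastforce
  then show False
    using y1_moderate unfolding moderate_def by simp
qed

lemma y1_path_end_on_P:
  assumes P: "P = pre @ x1 # v3 # (y1 # m1) @ u # x2 # m3" and x2: "x2 \<in> V2 V E S"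
    and f: "balanced V E S y1 f" "path_end E S f"
  shows "f \<in> ends P"
proof (cases rule: path_end_cases[OF f(2)])
  case (2 Rf Rf')
  note P = P list.distinct(2)
  have y1_f: "E (hd (y1 # m1)) (hd Rf')"
    using y1_balanced_edge[OF f(1)] 2(2) by simp
  show ?thesis
  proof (cases "E x2 (hd Rf')")
    case True
    obtain t where "balanced V E S y1 t" "t \<noteq> f"
      using y1_other_balanced by blast
    then show ?thesis
      using y1_end_other_x2_adjacent[OF P(1) pre_nonempty P(2) 2(1) edge_v3_u True]
        y1_balanced_edge 2(2) by auto
  next
    case False
    obtain z where z: "E x2 z" "z \<in> V1 E S" "\<not> consecutive P x2 z"
      using V2_free_neighbour_on_P[OF x2] P(1) by auto
    then show ?thesis
      using y1_end_other_x2_not_adjacent[OF P(1) pre_nonempty P(2) 2(1) edge_v3_u y1_f z] False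
      by blast
  qed
qed

lemma y1_not_balanced_to_first:
  assumes P: "P = pre @ x1 # v3 # (y1 # m1) @ u # x2 # m3" and x2: "x2 \<in> V2 V E S"
  shows "\<not> balanced V E S y1 (hd P)"
proof
  assume "balanced V E S y1 (hd P)"
  then have y1_first: "E (hd (y1 # m1)) (hd P)"
    using y1_balanced_edge by simp
  note P = P list.distinct(2)
  show False
  proof (cases "E x2 (hd P)")
    case True
    obtain t where "balanced V E S y1 t" "t \<noteq> hd P"
      using y1_other_balanced by blast
    then show False
      using y1_end_first_x2_adjacent[OF P(1) pre_nonempty P(2) edge_v3_u y1_first True]
        y1_balanced_edge by auto
  next
    case False
    obtain z where z: "E x2 z" "z \<in> V1 E S" "\<not> consecutive P x2 z"
      using V2_free_neighbour_on_P[OF x2] P(1) by auto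
    with False have "z \<noteq> hd P"
      by blast
    with z show False
      by (cases rule: x1_extension[of z])
        (use y1_end_first_x1_to_last[OF P(1) pre_nonempty P(2) edge_v3_u y1_first]
          y1_end_first_x1_to_other_component[OF P(1) pre_nonempty P(2) _ edge_v3_u y1_first]
          in auto)
  qed
qed

lemma y1_balanced_path_ends:
  assumes P: "P = pre @ x1 # v3 # (y1 # m1) @ u # x2 # m3" and x2: "x2 \<in> V2 V E S"
  shows "{w. balanced V E S y1 w \<and> path_end E S w} = {last P}"
proof -
  have "w = last P" if "balanced V E S y1 w" "path_end E S w" for w
    using y1_path_end_on_P[OF P x2 that] y1_not_balanced_to_first[OF P x2] that(1)
    unfolding ends_def by auto
  moreover have "\<exists>w. balanced V E S y1 w \<and> path_end E S w"
    using y1_moderate unfolding moderate_def by blast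
  ultimately show ?thesis
    by auto
qed

lemma y1_balanced_to_cycles:
  assumes P: "P = pre @ x1 # v3 # (y1 # m1) @ u # x2 # m3" and x2: "x2 \<in> V2 V E S"
    and w: "balanced V E S y1 w" "w \<noteq> last P"
  shows "in_cycle_comp E S w"
  using y1_balanced_edge[OF w(1)] y1_balanced_path_ends[OF P x2] w unfolding V1_def by blast

lemma x2_balanced_edges:
  assumes P: "P = pre @ x1 # v3 # (y1 # m1) @ u # x2 # m3" and x2: "x2 \<in> V2 V E S"
  shows "{w. balanced V E S x2 w} = {last P}"
proof -
  have y1_last: "E (hd (y1 # m1)) (last P)"
    using y1_balanced_path_ends[OF P x2] y1_balanced_edge by auto
  have "t = last P" if "balanced V E S x2 t" for t
    using balanced_from_V2[OF that x2]
      x2_balanced_only_to_last[OF P(1) pre_nonempty list.distinct(2) edge_v3_u y1_last]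
    unfolding free_edge_def by blast
  moreover obtain z where "z \<in> V1 E S" "free_edge E S x2 z"
    using x2 unfolding V2_def by blast
  then have "balanced V E S x2 z"
    using x2 unfolding balanced_def by blast
  ultimately show ?thesis
    by auto
qed

lemma configuration_around_u:
  obtains m1 x2 m3 where "P = pre @ x1 # v3 # y1 # m1 @ u # x2 # m3"
    "{w. path_nb E S u w \<and> w \<in> V2 V E S} = {x2}" "{w. balanced V E S x2 w} = {last P}"
    "{w. balanced V E S y1 w \<and> path_end E S w} = {last P}"
    "\<forall>w. balanced V E S y1 w \<and> w \<noteq> last P \<longrightarrow> in_cycle_comp E S w"
proof -
  obtain m1 m2 where P: "P = pre @ x1 # v3 # (y1 # m1) @ u # m2" "m2 \<noteq> []"
    using u_after_y1 by auto
  then obtain x2 m3 where m2: "m2 = x2 # m3"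
    by (cases m2) auto
  have "{w. path_nb E S u w \<and> w \<in> V2 V E S} = {x2}"
    using u_V2_path_neighbour[OF P(1) list.distinct(2) P(2)] m2 by simp
  moreover from this have "x2 \<in> V2 V E S"
    by blast
  ultimately show thesis
    using that x2_balanced_edges y1_balanced_path_ends y1_balanced_to_cycles P(1) m2 by auto
qed

end

theorem lemma3:
  fixes V :: "'a set" and E :: "'a \<Rightarrow> 'a \<Rightarrow> bool" and S :: "'a list set"
    and Q P :: "'a list" and i :: nat and x1 v3 y1 u :: 'a
  assumes G: "simple_graph V E" and reg: "regular 6 V E"
    and can: "canonical V E S"
    and QS: "Q \<in> S" and Qpath: "path_comp E Q"
    and P_orient: "P = Q \<or> P = rev Q"
    and i: "Suc i < length P" and x1: "P ! i = x1" and v3: "P ! Suc i = v3"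
    and x1_heavy: "heavy V E S x1" and v3_dang: "dangerous V E S v3"
    and y1: "path_nb E S v3 y1" "y1 \<noteq> x1"
    and uv3: "free_edge E S u v3"
    and u_nb: "\<exists>w. path_nb E S u w \<and> w \<in> V2 V E S"
  shows "u \<in> set P \<and>
    (\<exists>j. Suc (Suc i) < j \<and> Suc j < length P \<and> P ! Suc (Suc i) = y1 \<and> P ! j = u \<and>
       {w. path_nb E S u w \<and> w \<in> V2 V E S} = {P ! Suc j} \<and>
       {w. balanced V E S (P ! Suc j) w} = {last P}) \<and>
    {w. balanced V E S y1 w \<and> path_end E S w} = {last P} \<and>
    (\<forall>w. balanced V E S y1 w \<and> w \<noteq> last P \<longrightarrow> in_cycle_comp E S w)"
proof -
  interpret oriented_component V E S Q P
    using G can QS Qpath P_orient by unfold_locales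
  define pre where "pre = take i P"
  have "length pre = i"
    using i unfolding pre_def by simp
  have split: "P = pre @ x1 # v3 # drop (Suc (Suc i)) P"
    using i x1 v3 unfolding pre_def by (metis Cons_nth_drop_Suc Suc_lessD append_take_drop_id)
  obtain rest where rest: "drop (Suc (Suc i)) P = y1 # rest" and y1_moderate: "moderate V E S y1"
    using dangerous_split[OF split v3_dang y1] .
  have v3_class: "v3 \<notin> V1 E S" "v3 \<notin> V2 V E S"
    using v3_dang unfolding dangerous_def V3_def by blast+
  interpret heavy_dangerous_pair V E S Q P pre x1 v3 y1 rest u
    using split[unfolded rest] x1_heavy y1_moderate v3_class uv3 u_nb
    by (intro heavy_dangerous_pair.intro oriented_component_axioms heavy_dangerous_pair_axioms.intro)
  obtain m1 x2 m3 where Pu: "P = pre @ x1 # v3 # y1 # m1 @ u # x2 # m3"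
    and claims: "{w. path_nb E S u w \<and> w \<in> V2 V E S} = {x2}" "{w. balanced V E S x2 w} = {last P}"
      "{w. balanced V E S y1 w \<and> path_end E S w} = {last P}"
      "\<forall>w. balanced V E S y1 w \<and> w \<noteq> last P \<longrightarrow> in_cycle_comp E S w"
    using configuration_around_u by blast
  define j where "j = i + 3 + length m1"
  have "Suc (Suc i) < j" "P ! Suc (Suc i) = y1" "P ! j = u" "P ! Suc j = x2" "Suc j < length P"
    using arg_cong[OF Pu, of "\<lambda>L. L ! Suc (Suc i)"] arg_cong[OF Pu, of "\<lambda>L. L ! j"]
      arg_cong[OF Pu, of "\<lambda>L. L ! Suc j"] arg_cong[OF Pu, of length] \<open>length pre = i\<close>
    unfolding j_def by (simp_all add: nth_append)
  then show ?thesis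
    using u_on_P claims by (intro conjI exI[of _ j]) simp_all
qed

end
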